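(* Let $m\ge1$ be an integer, $b>0$, $c>0$, and let $\alpha_1,\alpha_2,\ldots$ be independent identically distributed nonnegative random variables with finite expected value $a=\mathsf{E}\alpha_1$ and finite variance. Define $x(k)=y(k)=0$ for all integers $k\le0$ and, for $k=1,2,\ldots$, \[ x(k)=x(k-1)+\alpha_k,\qquad y(k)=\max\bigl(x(k),\,y(k-1),\,y(k-m)+c\bigr)+b. \] Then the mean cycle time $\lambda=\lim_{k\to\infty}y(k)/k$ exists with probability one (and also equals $\lim_{k\to\infty}\mathsf{E}\,y(k)/k$), and \[ \lambda=\max\bigl(a,\;b,\;(b+c)/m\bigr). \]
   Context: Interpretation (not needed for the mathematics): this is a queueing model of a battery swapping and charging station with $m$ battery packs, where $x(k)$ is the arrival time of the $k$th electric vehicle, $\alpha_k$ the interarrival times, $b$ the swapping time of one pack, $c$ the charging time of one pack, and $y(k)$ the completion time of the $k$th swap. *)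

theory Defs
  imports "HOL-Probability.Probability"
begin

primrec xarr :: "(nat \<Rightarrow> real) \<Rightarrow> nat \<Rightarrow> real" where
  "xarr \<alpha> 0 = 0"
| "xarr \<alpha> (Suc k) = xarr \<alpha> k + \<alpha> (Suc k)"

text \<open>Completion times: y(k) = 0 for k <= 0 and
  y(k) = max(x(k), y(k-1), y(k-m) + c) + b for k >= 1.
  For k+1 <= m the index k+1-m is <= 0, so y(k+1-m) = 0.
  Otherwise (and m >= 1) the index k+1-m equals k - (m-1).\<close>
fun ycomp :: "nat \<Rightarrow> real \<Rightarrow> real \<Rightarrow> (nat \<Rightarrow> real) \<Rightarrow> nat \<Rightarrow> real" where
  "ycomp m b c \<alpha> 0 = 0"
| "ycomp m b c \<alpha> (Suc k) =
     max (max (xarr \<alpha> (Suc k)) (ycomp m b c \<alpha> k))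
         ((if Suc k \<le> m then 0 else ycomp m b c \<alpha> (k - (m - 1))) + c) + b"

end

theory Submission
  imports Defs "HOL-Library.Discrete_Functions" "HOL-Real_Asymp.Real_Asymp"
begin

(* The recursion alone fixes the growth rate. On one side y(k) >= x(k) + b, y(k) >= k b and
   y(k) >= (k div m) (b + c). On the other side, if x(j) <= L j + C for all j, where L >= b and
   L m >= b + c, then every branch of the recursion preserves y(k) <= L k + C + b + c. Hence
   y(k)/k tends to max(A, b, (b + c)/m) whenever x(k)/k tends to A.

   Finite variance gives the strong law for x(k)/k: along the squares k = n^2, Chebyshev's bounds
   v/(e^2 n^2) are summable, so Borel-Cantelli applies, and since x is monotone the values between
   consecutive squares are squeezed. For the means, 0 <= y(k) - x(k) <= max(b, (b + c)/m) k + b + c,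
   so (y(k) - x(k))/k is bounded and dominated convergence applies. *)

lemma xarr_eq_sum: "xarr a k = (\<Sum>i=1..k. a i)"
  by (induction k) (auto simp: add.commute)

lemma incseq_xarr:
  assumes "\<And>i. i \<ge> 1 \<Longrightarrow> 0 \<le> a i"
  shows "incseq (xarr a)"
  by (rule incseq_SucI) (simp add: assms)

lemma xarr_add_le_ycomp: "1 \<le> k \<Longrightarrow> xarr a k + b \<le> ycomp m b c a k"
  by (cases k) auto

lemma ycomp_lag_le:
  assumes "1 \<le> m" "m \<le> k"
  shows "ycomp m b c a (k - m) + c + b \<le> ycomp m b c a k"
proof -
  obtain k' where k: "k = Suc k'" using assms by (cases k) auto
  show ?thesis
  proof (cases "Suc k' \<le> m")
    case True
    then show ?thesis using assms k by simp
  next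
    case False
    then have "k' - (m - 1) = k - m" using k assms(1) by arith
    then show ?thesis using False k by simp
  qed
qed

lemma mult_le_ycomp: "real k * b \<le> ycomp m b c a k"
proof (induction k)
  case (Suc k)
  have "ycomp m b c a k + b \<le> ycomp m b c a (Suc k)" by simp
  moreover have "real (Suc k) * b = real k * b + b" by (simp add: algebra_simps)
  ultimately show ?case using Suc by linarith
qed simp

lemma div_mult_le_ycomp:
  assumes "1 \<le> m" "0 \<le> b" "0 \<le> c"
  shows "real (k div m) * (b + c) \<le> ycomp m b c a k"
proof (induction k rule: less_induct)
  case (less k)
  show ?case
  proof (cases "k < m")
    case True
    then have "k div m = 0" by simp
    moreover have "0 \<le> real k * b" using assms by simp
    ultimately show ?thesis using mult_le_ycomp[of k b m c a] by simp
  next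
    case False
    then have "k div m = (k - m) div m + 1" using assms by (simp add: le_div_geq)
    moreover have "real ((k - m) div m) * (b + c) \<le> ycomp m b c a (k - m)"
      using less assms False by simp
    ultimately show ?thesis using ycomp_lag_le[of m k b c a] assms False
      by (simp add: algebra_simps)
  qed
qed

lemma ycomp_le_linear:
  assumes m: "1 \<le> m" and b: "0 \<le> b" "b \<le> L" and c: "0 \<le> c" "b + c \<le> L * real m"
    and x: "\<And>j. j \<le> k \<Longrightarrow> xarr a j \<le> L * real j + C"
  shows "ycomp m b c a k \<le> L * real k + C + b + c"
  using x
proof (induction k rule: less_induct)
  case (less k)
  have C: "0 \<le> C" using less.prems[of 0] by simp
  show ?case
  proof (cases k)
    case 0
    then show ?thesis using C b c by simp
  next
    case (Suc k')
    have "ycomp m b c a k' \<le> L * real k' + C + b + c"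
      by (rule less.IH) (use less.prems Suc in auto)
    then have prev: "ycomp m b c a k' + b \<le> L * real k + C + b + c"
      using Suc b by (simp add: algebra_simps)
    have lag: "(if k \<le> m then 0 else ycomp m b c a (k' - (m - 1))) + c + b
        \<le> L * real k + C + b + c"
    proof (cases "k \<le> m")
      case True
      then show ?thesis using C b c by simp
    next
      case False
      then have j: "k' - (m - 1) = k - m" "real (k - m) = real k - real m"
        using Suc m by (simp_all add: of_nat_diff)
      have "ycomp m b c a (k - m) \<le> L * real (k - m) + C + b + c"
        by (rule less.IH) (use less.prems False m in auto)
      then show ?thesis using False c j by (simp add: algebra_simps)
    qed
    have "xarr a k + b \<le> L * real k + C + b + c" using less.prems[of k] c by simp
    with prev lag show ?thesis
      unfolding Suc ycomp.simps by (simp only: Suc max_add_distrib_left max.bounded_iff)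
  qed
qed

lemma ycomp_over_n_lower_bound:
  assumes m: "1 \<le> m" and b: "0 \<le> b" and c: "0 \<le> c" and k: "1 \<le> k"
  shows "max (xarr a k / real k) (max b ((b + c) / real m - (b + c) / real k))
    \<le> ycomp m b c a k / real k"
proof -
  have k0: "0 < real k" using k by simp
  have "xarr a k \<le> ycomp m b c a k" using xarr_add_le_ycomp[OF k, of a b m c] b by simp
  then have x: "xarr a k / real k \<le> ycomp m b c a k / real k"
    using k0 by (simp add: divide_right_mono)
  have "b \<le> ycomp m b c a k / real k"
    using mult_le_ycomp[of k b m c a] k0 by (simp add: pos_le_divide_eq mult.commute)
  moreover have "(b + c) / real m - (b + c) / real k \<le> ycomp m b c a k / real k"
  proof -
    have "k mod m < m" using m by simp
    then have "k < m * (k div m) + m" using mult_div_mod_eq[of m k] by linarith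
    then have "real k / real m - 1 \<le> real (k div m)"
      using m by (simp add: field_simps flip: of_nat_mult of_nat_add)
    then have "(real k / real m - 1) * (b + c) \<le> ycomp m b c a k"
      using div_mult_le_ycomp[OF m b c, of k a] b c
      by (meson add_nonneg_nonneg mult_right_mono order_trans)
    moreover have "(real k / real m - 1) * (b + c) / real k = (b + c) / real m - (b + c) / real k"
      using k0 m by (simp add: field_simps)
    ultimately show ?thesis using k0 by (metis divide_right_mono less_imp_le)
  qed
  ultimately show ?thesis using x by simp
qed

lemma incseq_le_linear:
  fixes f :: "nat \<Rightarrow> real"
  assumes mono: "incseq f" and lim: "(\<lambda>k. f k / real k) \<longlonglongrightarrow> A"
    and L: "A < L" "0 \<le> L"
  shows "\<exists>C. \<forall>j. f j \<le> L * real j + C"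
proof -
  obtain N where N: "\<And>j. N \<le> j \<Longrightarrow> f j / real j < L"
    using order_tendstoD(2)[OF lim L(1)] by (auto simp: eventually_sequentially)
  have "f j \<le> L * real j + \<bar>f N\<bar>" for j
  proof (cases "j < N")
    case True
    then show ?thesis using incseqD[OF mono, of j N] L(2) by (simp add: add_increasing)
  next
    case False
    show ?thesis
    proof (cases "j = 0")
      case True
      then show ?thesis using False by simp
    next
      case j: False
      then have "f j < L * real j" using N[of j] False by (simp add: divide_less_eq mult.commute)
      then show ?thesis by simp
    qed
  qed
  then show ?thesis by blast
qed

lemma ycomp_over_n_tendsto:
  assumes m: "1 \<le> m" and b: "0 \<le> b" and c: "0 \<le> c"
    and nonneg: "\<And>i. 1 \<le> i \<Longrightarrow> 0 \<le> a i"
    and x: "(\<lambda>k. xarr a k / real k) \<longlonglongrightarrow> A"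
  shows "(\<lambda>k. ycomp m b c a k / real k) \<longlonglongrightarrow> max A (max b ((b + c) / real m))"
    (is "_ \<longlonglongrightarrow> ?lim")
proof (rule order_tendstoI)
  fix z assume z: "z < ?lim"
  have "(\<lambda>k. max (xarr a k / real k) (max b ((b + c) / real m - (b + c) / real k)))
      \<longlonglongrightarrow> max A (max b ((b + c) / real m - 0))"
    by (intro tendsto_intros x lim_const_over_n)
  then have "eventually (\<lambda>k. z < max (xarr a k / real k) (max b ((b + c) / real m - (b + c) / real k)))
      sequentially"
    using z by (simp add: order_tendstoD)
  then show "eventually (\<lambda>k. z < ycomp m b c a k / real k) sequentially"
    using eventually_ge_at_top[of 1]
    by eventually_elim (meson ycomp_over_n_lower_bound[OF m b c] less_le_trans)
next
  fix z assume z: "?lim < z"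
  define L where "L = (?lim + z) / 2"
  have lim_L: "?lim < L" "L < z" using z by (simp_all add: L_def)
  have "(b + c) / real m \<le> L" using lim_L(1) by simp
  then have "b + c \<le> L * real m" using m by (simp add: pos_divide_le_eq)
  then have L: "A < L" "b \<le> L" "b + c \<le> L * real m" "L < z" using lim_L by auto
  have x_mono: "incseq (xarr a)" by (rule incseq_xarr) (use nonneg in auto)
  obtain C where "\<And>j. xarr a j \<le> L * real j + C"
    using incseq_le_linear[OF x_mono x L(1)] L(2) b by auto
  then have y: "ycomp m b c a k \<le> L * real k + (C + b + c)" for k
    using ycomp_le_linear[OF m b L(2) c L(3)] by (simp add: add.assoc)
  have "eventually (\<lambda>k. (C + b + c) / real k < z - L) sequentially"
    using L(4) by (intro order_tendstoD(2)[OF lim_const_over_n]) simp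
  then show "eventually (\<lambda>k. ycomp m b c a k / real k < z) sequentially"
    using eventually_ge_at_top[of 1]
  proof eventually_elim
    case (elim k)
    then have "ycomp m b c a k / real k \<le> L + (C + b + c) / real k"
      using y[of k] by (simp add: field_simps)
    then show ?case using elim by simp
  qed
qed

lemma tendsto_over_square_Suc:
  fixes f :: "nat \<Rightarrow> real"
  assumes lim: "(\<lambda>n. f n / real n ^ 2) \<longlonglongrightarrow> A"
  shows "(\<lambda>n. f n / real (Suc n) ^ 2) \<longlonglongrightarrow> A"
    and "(\<lambda>n. f (Suc n) / real n ^ 2) \<longlonglongrightarrow> A"
proof -
  show "(\<lambda>n. f n / real (Suc n) ^ 2) \<longlonglongrightarrow> A"
  proof (rule Lim_transform_eventually)
    have "(\<lambda>n. real n ^ 2 / real (Suc n) ^ 2) \<longlonglongrightarrow> 1" by real_asymp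
    then show "(\<lambda>n. f n / real n ^ 2 * (real n ^ 2 / real (Suc n) ^ 2)) \<longlonglongrightarrow> A"
      using tendsto_mult[OF lim] by fastforce
    show "eventually (\<lambda>n. f n / real n ^ 2 * (real n ^ 2 / real (Suc n) ^ 2)
        = f n / real (Suc n) ^ 2) sequentially"
      using eventually_gt_at_top[of 0] by eventually_elim simp
  qed
  show "(\<lambda>n. f (Suc n) / real n ^ 2) \<longlonglongrightarrow> A"
  proof (rule Lim_transform_eventually)
    have "(\<lambda>n. real (Suc n) ^ 2 / real n ^ 2) \<longlonglongrightarrow> 1" by real_asymp
    then show "(\<lambda>n. f (Suc n) / real (Suc n) ^ 2 * (real (Suc n) ^ 2 / real n ^ 2)) \<longlonglongrightarrow> A"
      using tendsto_mult[OF LIMSEQ_Suc[OF lim]] by fastforce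
    show "eventually (\<lambda>n. f (Suc n) / real (Suc n) ^ 2 * (real (Suc n) ^ 2 / real n ^ 2)
        = f (Suc n) / real n ^ 2) sequentially"
      using eventually_gt_at_top[of 0] by eventually_elim simp
  qed
qed

lemma tendsto_over_n_of_squares:
  fixes S :: "nat \<Rightarrow> real"
  assumes mono: "incseq S" and nonneg: "\<And>k. 0 \<le> S k"
    and lim: "(\<lambda>n. S (n\<^sup>2) / real (n\<^sup>2)) \<longlonglongrightarrow> A"
  shows "(\<lambda>k. S k / real k) \<longlonglongrightarrow> A"
proof -
  define r where "r k = floor_sqrt k" for k
  have r: "filterlim r at_top sequentially"
    unfolding filterlim_at_top eventually_sequentially r_def by (meson le_floor_sqrtI)
  have lim': "(\<lambda>n. S (n\<^sup>2) / real n ^ 2) \<longlonglongrightarrow> A" using lim by simp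
  have lower: "(\<lambda>k. S (r k ^ 2) / real (Suc (r k)) ^ 2) \<longlonglongrightarrow> A"
    by (rule filterlim_compose[OF tendsto_over_square_Suc(1)[OF lim'] r])
  have upper: "(\<lambda>k. S (Suc (r k) ^ 2) / real (r k) ^ 2) \<longlonglongrightarrow> A"
    by (rule filterlim_compose[OF tendsto_over_square_Suc(2)[OF lim'] r])
  show ?thesis
  proof (rule tendsto_sandwich[OF _ _ lower upper])
    show "eventually (\<lambda>k. S (r k ^ 2) / real (Suc (r k)) ^ 2 \<le> S k / real k) sequentially"
      using eventually_ge_at_top[of 1]
    proof eventually_elim
      case (elim k)
      have "S (r k ^ 2) \<le> S k" using incseqD[OF mono] floor_sqrt_power2_le r_def by simp
      moreover have "k \<le> Suc (r k) ^ 2"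
        using Suc_floor_sqrt_power2_gt[of k] unfolding r_def by simp
      then have "real k \<le> real (Suc (r k)) ^ 2"
        by (simp only: of_nat_power [symmetric] of_nat_le_iff)
      ultimately show ?case using elim nonneg
        by (meson frac_le less_le_trans of_nat_0_less_iff zero_less_one)
    qed
    show "eventually (\<lambda>k. S k / real k \<le> S (Suc (r k) ^ 2) / real (r k) ^ 2) sequentially"
      using eventually_ge_at_top[of 1]
    proof eventually_elim
      case (elim k)
      have "S k \<le> S (Suc (r k) ^ 2)"
        using incseqD[OF mono] Suc_floor_sqrt_power2_gt[of k] r_def by simp
      moreover have "real (r k) ^ 2 \<le> real k" "0 < real (r k) ^ 2"
        using floor_sqrt_power2_le[of k] elim unfolding r_def by (simp_all flip: of_nat_power)
      ultimately show ?case using nonneg by (meson frac_le)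
    qed
  qed
qed

lemma abs_ycomp_minus_xarr_over_n_le:
  assumes m: "1 \<le> m" and b: "0 \<le> b" and c: "0 \<le> c"
    and nonneg: "\<And>i. 1 \<le> i \<Longrightarrow> 0 \<le> a i"
  shows "\<bar>(ycomp m b c a k - xarr a k) / real k\<bar> \<le> max b ((b + c) / real m) + b + c"
proof (cases "k = 0")
  case True
  then show ?thesis using b c by simp
next
  case False
  define L where "L = max b ((b + c) / real m)"
  have "(b + c) / real m \<le> L" by (simp add: L_def)
  then have Lm: "b + c \<le> L * real m" using m by (simp add: pos_divide_le_eq)
  have Lb: "b \<le> L" by (simp add: L_def)
  have x_mono: "incseq (xarr a)" by (rule incseq_xarr) (use nonneg in auto)
  have "xarr a j \<le> L * real j + xarr a k" if "j \<le> k" for j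
  proof -
    have "0 \<le> L * real j" using Lb b by simp
    then show ?thesis using incseqD[OF x_mono that] by linarith
  qed
  then have "ycomp m b c a k \<le> L * real k + xarr a k + b + c"
    by (rule ycomp_le_linear[OF m b Lb c Lm])
  then have "(ycomp m b c a k - xarr a k) / real k \<le> L + (b + c) / real k"
    using False by (simp add: divide_simps)
  also have "\<dots> \<le> L + b + c"
    using False b c by (simp add: divide_le_eq mult_le_cancel_left1)
  finally show ?thesis
    using xarr_add_le_ycomp[of k a b m c] False b by (simp add: L_def)
qed

lemma borel_measurable_ycomp:
  assumes "\<And>i. 1 \<le> i \<Longrightarrow> \<alpha> i \<in> borel_measurable M"
  shows "(\<lambda>\<omega>. ycomp m b c (\<lambda>i. \<alpha> i \<omega>) k) \<in> borel_measurable M"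
proof (induction k rule: less_induct)
  case (less k)
  have x: "(\<lambda>\<omega>. xarr (\<lambda>i. \<alpha> i \<omega>) j) \<in> borel_measurable M" for j
    unfolding xarr_eq_sum using assms by measurable
  show ?case
  proof (cases k)
    case (Suc k')
    have [measurable]: "(\<lambda>\<omega>. ycomp m b c (\<lambda>i. \<alpha> i \<omega>) k') \<in> borel_measurable M"
      "(\<lambda>\<omega>. ycomp m b c (\<lambda>i. \<alpha> i \<omega>) (k' - (m - 1))) \<in> borel_measurable M"
      using less Suc by auto
    show ?thesis unfolding Suc ycomp.simps using x by measurable
  qed simp
qed

lemma integrable_integral_cong_distr:
  fixes g :: "real \<Rightarrow> real"
  assumes X: "X \<in> borel_measurable M" and Y: "Y \<in> borel_measurable M"
    and XY: "distr M borel X = distr M borel Y" and g: "g \<in> borel_measurable borel"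
  shows "integrable M (\<lambda>\<omega>. g (X \<omega>)) \<longleftrightarrow> integrable M (\<lambda>\<omega>. g (Y \<omega>))"
    and "(\<integral>\<omega>. g (X \<omega>) \<partial>M) = (\<integral>\<omega>. g (Y \<omega>) \<partial>M)"
  using integrable_distr_eq[OF X g] integrable_distr_eq[OF Y g]
    integral_distr[OF X g] integral_distr[OF Y g] XY by simp_all

lemma AE_LIMSEQ_zeroI:
  fixes f :: "nat \<Rightarrow> 'a \<Rightarrow> real"
  assumes "\<And>e. 0 < e \<Longrightarrow> AE \<omega> in M. eventually (\<lambda>n. \<bar>f n \<omega>\<bar> < e) sequentially"
  shows "AE \<omega> in M. (\<lambda>n. f n \<omega>) \<longlonglongrightarrow> 0"
proof -
  have "AE \<omega> in M. \<forall>r::nat. eventually (\<lambda>n. \<bar>f n \<omega>\<bar> < inverse (real (Suc r))) sequentially"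
    unfolding AE_all_countable using assms by simp
  then show ?thesis
  proof eventually_elim
    case (elim \<omega>)
    show ?case unfolding tendsto_iff
    proof (intro allI impI)
      fix e :: real assume "0 < e"
      then obtain r where "inverse (real (Suc r)) < e" using reals_Archimedean by blast
      then show "eventually (\<lambda>n. dist (f n \<omega>) 0 < e) sequentially"
        using elim[rule_format, of r] by (auto elim: eventually_mono)
    qed
  qed
qed

lemma (in prob_space) expectation_square_sum_indep:
  fixes X :: "'i \<Rightarrow> 'a \<Rightarrow> real"
  assumes fin: "finite I" and ind: "indep_vars (\<lambda>_. borel) X I"
    and sq: "\<And>i. i \<in> I \<Longrightarrow> integrable M (\<lambda>\<omega>. (X i \<omega>)\<^sup>2)"
    and mean: "\<And>i. i \<in> I \<Longrightarrow> expectation (X i) = 0"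
  shows "integrable M (\<lambda>\<omega>. (\<Sum>i\<in>I. X i \<omega>)\<^sup>2)"
    and "expectation (\<lambda>\<omega>. (\<Sum>i\<in>I. X i \<omega>)\<^sup>2) = (\<Sum>i\<in>I. expectation (\<lambda>\<omega>. (X i \<omega>)\<^sup>2))"
proof -
  have int: "integrable M (X i)" if "i \<in> I" for i
  proof (rule square_integrable_imp_integrable)
    show "X i \<in> borel_measurable M" using ind[unfolded indep_vars_def] that by blast
  qed (rule sq[OF that])
  have square_sum: "(\<lambda>\<omega>. (\<Sum>i\<in>I. X i \<omega>)\<^sup>2) = (\<lambda>\<omega>. \<Sum>i\<in>I. \<Sum>j\<in>I. X i \<omega> * X j \<omega>)"
    by (simp add: power2_eq_square sum_product)
  have prod: "integrable M (\<lambda>\<omega>. X i \<omega> * X j \<omega>) \<and>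
      expectation (\<lambda>\<omega>. X i \<omega> * X j \<omega>) = (if i = j then expectation (\<lambda>\<omega>. (X i \<omega>)\<^sup>2) else 0)"
    if ij: "i \<in> I" "j \<in> I" for i j
  proof (cases "i = j")
    case True
    then show ?thesis using sq[OF ij(1)] by (simp add: power2_eq_square)
  next
    case False
    have ind2: "indep_vars (\<lambda>_. borel) X {i, j}"
      by (rule indep_vars_subset[OF ind]) (use ij in auto)
    have "integrable M (\<lambda>\<omega>. \<Prod>k\<in>{i, j}. X k \<omega>)"
      by (rule indep_vars_integrable) (use ind2 int ij in auto)
    moreover have "expectation (\<lambda>\<omega>. \<Prod>k\<in>{i, j}. X k \<omega>) = (\<Prod>k\<in>{i, j}. expectation (X k))"
      by (rule indep_vars_lebesgue_integral) (use ind2 int ij in auto)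
    moreover have "(\<lambda>\<omega>. \<Prod>k\<in>{i, j}. X k \<omega>) = (\<lambda>\<omega>. X i \<omega> * X j \<omega>)"
      using False by simp
    ultimately show ?thesis using False mean ij by simp
  qed
  show "integrable M (\<lambda>\<omega>. (\<Sum>i\<in>I. X i \<omega>)\<^sup>2)"
    unfolding square_sum using prod by (intro Bochner_Integration.integrable_sum) auto
  have "expectation (\<lambda>\<omega>. \<Sum>i\<in>I. \<Sum>j\<in>I. X i \<omega> * X j \<omega>)
      = (\<Sum>i\<in>I. \<Sum>j\<in>I. if i = j then expectation (\<lambda>\<omega>. (X i \<omega>)\<^sup>2) else 0)"
    using prod by (simp add: Bochner_Integration.integral_sum Bochner_Integration.integrable_sum)
  also have "\<dots> = (\<Sum>i\<in>I. expectation (\<lambda>\<omega>. (X i \<omega>)\<^sup>2))"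
    using fin by simp
  finally show "expectation (\<lambda>\<omega>. (\<Sum>i\<in>I. X i \<omega>)\<^sup>2) = (\<Sum>i\<in>I. expectation (\<lambda>\<omega>. (X i \<omega>)\<^sup>2))"
    unfolding square_sum .
qed

lemma (in prob_space) variance_sum_indep:
  fixes X :: "'i \<Rightarrow> 'a \<Rightarrow> real"
  assumes fin: "finite I" and ind: "indep_vars (\<lambda>_. borel) X I"
    and sq: "\<And>i. i \<in> I \<Longrightarrow> integrable M (\<lambda>\<omega>. (X i \<omega>)\<^sup>2)"
  shows "integrable M (\<lambda>\<omega>. (\<Sum>i\<in>I. X i \<omega>)\<^sup>2)"
    and "variance (\<lambda>\<omega>. \<Sum>i\<in>I. X i \<omega>) = (\<Sum>i\<in>I. variance (X i))"
proof -
  have int: "integrable M (X i)" if "i \<in> I" for i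
  proof (rule square_integrable_imp_integrable)
    show "X i \<in> borel_measurable M" using ind[unfolded indep_vars_def] that by blast
  qed (rule sq[OF that])
  define Y where "Y i \<omega> = X i \<omega> - expectation (X i)" for i \<omega>
  have Y_ind: "indep_vars (\<lambda>_. borel) Y I"
    unfolding Y_def by (rule indep_vars_compose2[OF ind]) auto
  have Y_int: "integrable M (Y i)" if "i \<in> I" for i
    unfolding Y_def using int[OF that] by simp
  have Y_sq: "integrable M (\<lambda>\<omega>. (Y i \<omega>)\<^sup>2)" if "i \<in> I" for i
    unfolding Y_def power2_diff using int[OF that] sq[OF that] by auto
  have Y_mean: "expectation (Y i) = 0" if "i \<in> I" for i
    unfolding Y_def using int[OF that] by (simp add: prob_space)
  have Y_sum: "integrable M (\<lambda>\<omega>. (\<Sum>i\<in>I. Y i \<omega>)\<^sup>2)"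
    "expectation (\<lambda>\<omega>. (\<Sum>i\<in>I. Y i \<omega>)\<^sup>2) = (\<Sum>i\<in>I. expectation (\<lambda>\<omega>. (Y i \<omega>)\<^sup>2))"
    by (rule expectation_square_sum_indep[OF fin Y_ind]; simp add: Y_sq Y_mean)+
  define c where "c = (\<Sum>i\<in>I. expectation (X i))"
  have X_sum: "(\<Sum>i\<in>I. X i \<omega>) = (\<Sum>i\<in>I. Y i \<omega>) + c" for \<omega>
    by (simp add: Y_def c_def sum_subtractf)
  show "integrable M (\<lambda>\<omega>. (\<Sum>i\<in>I. X i \<omega>)\<^sup>2)"
    unfolding X_sum power2_sum using Y_sum(1) Y_int by (auto intro!: Bochner_Integration.integrable_sum)
  have "expectation (\<lambda>\<omega>. \<Sum>i\<in>I. X i \<omega>) = c"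
    using int by (simp add: c_def Bochner_Integration.integral_sum)
  then show "variance (\<lambda>\<omega>. \<Sum>i\<in>I. X i \<omega>) = (\<Sum>i\<in>I. variance (X i))"
    using Y_sum(2) by (simp add: X_sum Y_def)
qed

lemma (in prob_space) prob_mean_deviation_le:
  fixes X :: "nat \<Rightarrow> 'a \<Rightarrow> real"
  assumes ind: "indep_vars (\<lambda>_. borel) X {1..}"
    and sq: "\<And>i. 1 \<le> i \<Longrightarrow> integrable M (\<lambda>\<omega>. (X i \<omega>)\<^sup>2)"
    and mean: "\<And>i. 1 \<le> i \<Longrightarrow> expectation (X i) = a"
    and var: "\<And>i. 1 \<le> i \<Longrightarrow> variance (X i) \<le> v"
    and e: "0 < e" and n: "1 \<le> n"
  shows "prob {\<omega> \<in> space M. e \<le> \<bar>(\<Sum>i=1..n. X i \<omega>) / real n - a\<bar>} \<le> v / (e\<^sup>2 * real n)"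
proof -
  have [measurable]: "X i \<in> borel_measurable M" if "1 \<le> i" for i
    using ind[unfolded indep_vars_def] that by auto
  define f where "f \<omega> = (\<Sum>i=1..n. X i \<omega>)" for \<omega>
  have [measurable]: "f \<in> borel_measurable M" unfolding f_def by measurable
  have "indep_vars (\<lambda>_. borel) X {1..n}" by (rule indep_vars_subset[OF ind]) auto
  note f_var = variance_sum_indep[OF _ this, folded f_def]
  have "expectation f = real n * a"
    unfolding f_def using sq mean
    by (simp add: Bochner_Integration.integral_sum square_integrable_imp_integrable)
  then have "{\<omega> \<in> space M. e \<le> \<bar>(\<Sum>i=1..n. X i \<omega>) / real n - a\<bar>}
      = {\<omega> \<in> space M. e * real n \<le> \<bar>f \<omega> - expectation f\<bar>}"
    using n by (auto simp: f_def abs_div field_simps)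
  also have "prob \<dots> \<le> variance f / (e * real n)\<^sup>2"
    by (rule Chebyshev_inequality) (use f_var(1) sq e n in auto)
  also have "\<dots> \<le> real n * v / (e * real n)\<^sup>2"
  proof (rule divide_right_mono)
    have "variance f = (\<Sum>i=1..n. variance (X i))" by (rule f_var(2)) (use sq in auto)
    also have "\<dots> \<le> real n * v" using sum_mono[of "{1..n}" _ "\<lambda>_. v"] var by simp
    finally show "variance f \<le> real n * v" .
  qed simp
  also have "\<dots> = v / (e\<^sup>2 * real n)"
    using n e by (simp add: field_simps power2_eq_square)
  finally show ?thesis .
qed

lemma (in prob_space) AE_mean_tendsto_along_squares:
  fixes X :: "nat \<Rightarrow> 'a \<Rightarrow> real"
  assumes ind: "indep_vars (\<lambda>_. borel) X {1..}"
    and sq: "\<And>i. 1 \<le> i \<Longrightarrow> integrable M (\<lambda>\<omega>. (X i \<omega>)\<^sup>2)"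
    and mean: "\<And>i. 1 \<le> i \<Longrightarrow> expectation (X i) = a"
    and var: "\<And>i. 1 \<le> i \<Longrightarrow> variance (X i) \<le> v"
  shows "AE \<omega> in M. (\<lambda>n. (\<Sum>i=1..n\<^sup>2. X i \<omega>) / real (n\<^sup>2)) \<longlonglongrightarrow> a"
proof -
  have [measurable]: "X i \<in> borel_measurable M" if "1 \<le> i" for i
    using ind[unfolded indep_vars_def] that by auto
  have "AE \<omega> in M. (\<lambda>n. (\<Sum>i=1..n\<^sup>2. X i \<omega>) / real (n\<^sup>2) - a) \<longlonglongrightarrow> 0"
  proof (rule AE_LIMSEQ_zeroI)
    fix e :: real assume e: "0 < e"
    define A where "A n = {\<omega> \<in> space M. e \<le> \<bar>(\<Sum>i=1..n\<^sup>2. X i \<omega>) / real (n\<^sup>2) - a\<bar>}" for n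
    have [measurable]: "A n \<in> sets M" for n unfolding A_def by measurable
    have bound: "measure M (A n) \<le> v / e\<^sup>2 * inverse (real n ^ 2)" if "1 \<le> n" for n
      using prob_mean_deviation_le[OF ind sq mean var e, of "n\<^sup>2"] that
      by (simp add: A_def field_simps)
    have "summable (\<lambda>n. v / e\<^sup>2 * inverse (real n ^ 2))"
      by (intro summable_mult inverse_power_summable) simp
    then have "summable (\<lambda>n. measure M (A n))"
      by (rule summable_comparison_test'[where N = 1]) (use bound in auto)
    then have "AE \<omega> in M. eventually (\<lambda>n. \<omega> \<in> space M - A n) sequentially"
      by (intro borel_cantelli_AE1) (simp_all add: less_top[symmetric])
    then show "AE \<omega> in M. eventually
        (\<lambda>n. \<bar>(\<Sum>i=1..n\<^sup>2. X i \<omega>) / real (n\<^sup>2) - a\<bar> < e) sequentially"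
      by (rule AE_mp) (auto intro!: AE_I2 elim!: eventually_mono simp: A_def not_le)
  qed
  then show ?thesis by (simp add: LIM_zero_iff)
qed

lemma (in prob_space) AE_mean_tendsto_nonneg:
  fixes X :: "nat \<Rightarrow> 'a \<Rightarrow> real"
  assumes ind: "indep_vars (\<lambda>_. borel) X {1..}"
    and sq: "\<And>i. 1 \<le> i \<Longrightarrow> integrable M (\<lambda>\<omega>. (X i \<omega>)\<^sup>2)"
    and mean: "\<And>i. 1 \<le> i \<Longrightarrow> expectation (X i) = a"
    and var: "\<And>i. 1 \<le> i \<Longrightarrow> variance (X i) \<le> v"
    and nonneg: "\<And>i. 1 \<le> i \<Longrightarrow> AE \<omega> in M. 0 \<le> X i \<omega>"
  shows "AE \<omega> in M. (\<lambda>n. (\<Sum>i=1..n. X i \<omega>) / real n) \<longlonglongrightarrow> a"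
proof -
  have "AE \<omega> in M. \<forall>i. 1 \<le> i \<longrightarrow> 0 \<le> X i \<omega>"
    unfolding AE_all_countable using nonneg by auto
  moreover have "AE \<omega> in M. (\<lambda>n. (\<Sum>i=1..n\<^sup>2. X i \<omega>) / real (n\<^sup>2)) \<longlonglongrightarrow> a"
    by (rule AE_mean_tendsto_along_squares[OF ind]) (rule sq mean var, assumption)+
  ultimately show ?thesis
  proof eventually_elim
    case (elim \<omega>)
    have mono: "incseq (xarr (\<lambda>i. X i \<omega>))" by (rule incseq_xarr) (use elim in auto)
    have "(\<lambda>k. xarr (\<lambda>i. X i \<omega>) k / real k) \<longlonglongrightarrow> a"
    proof (rule tendsto_over_n_of_squares[OF mono])
      show "0 \<le> xarr (\<lambda>i. X i \<omega>) k" for k using incseqD[OF mono, of 0 k] by simp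
      show "(\<lambda>n. xarr (\<lambda>i. X i \<omega>) (n\<^sup>2) / real (n\<^sup>2)) \<longlonglongrightarrow> a"
        using elim(2) by (simp add: xarr_eq_sum)
    qed
    then show ?case by (simp add: xarr_eq_sum)
  qed
qed

lemma (in prob_space) expectation_ycomp_minus_xarr_over_n_tendsto:
  fixes \<alpha> :: "nat \<Rightarrow> 'a \<Rightarrow> real"
  assumes m: "1 \<le> m" and b: "0 \<le> b" and c: "0 \<le> c"
    and meas: "\<And>i. 1 \<le> i \<Longrightarrow> \<alpha> i \<in> borel_measurable M"
    and nonneg: "\<And>i. 1 \<le> i \<Longrightarrow> AE \<omega> in M. 0 \<le> \<alpha> i \<omega>"
    and lim: "AE \<omega> in M. (\<lambda>k. xarr (\<lambda>i. \<alpha> i \<omega>) k / real k) \<longlonglongrightarrow> a"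
  defines "G k \<omega> \<equiv> (ycomp m b c (\<lambda>i. \<alpha> i \<omega>) k - xarr (\<lambda>i. \<alpha> i \<omega>) k) / real k"
  shows "integrable M (G k)"
    and "(\<lambda>k. expectation (G k)) \<longlonglongrightarrow> max a (max b ((b + c) / real m)) - a"
proof -
  define \<mu> where "\<mu> = max b ((b + c) / real m)"
  have G_meas: "G k \<in> borel_measurable M" for k
    unfolding G_def xarr_eq_sum using borel_measurable_ycomp[of \<alpha> M] meas by measurable
  have nonneg_all: "AE \<omega> in M. \<forall>i. 1 \<le> i \<longrightarrow> 0 \<le> \<alpha> i \<omega>"
    unfolding AE_all_countable using nonneg by auto
  have G_bound: "AE \<omega> in M. norm (G k \<omega>) \<le> \<mu> + b + c" for k
    using nonneg_all
  proof eventually_elim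
    case (elim \<omega>)
    show ?case unfolding G_def \<mu>_def real_norm_def
      by (rule abs_ycomp_minus_xarr_over_n_le[OF m b c]) (use elim in auto)
  qed
  show "integrable M (G k)" for k
    by (rule integrable_const_bound[OF G_bound G_meas])
  have G_lim: "AE \<omega> in M. (\<lambda>k. G k \<omega>) \<longlonglongrightarrow> max a \<mu> - a"
    using lim nonneg_all
  proof eventually_elim
    case (elim \<omega>)
    have "(\<lambda>k. ycomp m b c (\<lambda>i. \<alpha> i \<omega>) k / real k - xarr (\<lambda>i. \<alpha> i \<omega>) k / real k)
        \<longlonglongrightarrow> max a \<mu> - a"
      unfolding \<mu>_def
      by (intro tendsto_diff ycomp_over_n_tendsto[OF m b c] elim(1)) (use elim(2) in auto)
    then show ?case by (simp add: G_def diff_divide_distrib)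
  qed
  have "(\<lambda>k. expectation (G k)) \<longlonglongrightarrow> expectation (\<lambda>_. max a \<mu> - a)"
    by (rule integral_dominated_convergence[OF _ G_meas _ G_lim G_bound]) auto
  then show "(\<lambda>k. expectation (G k)) \<longlonglongrightarrow> max a (max b ((b + c) / real m)) - a"
    by (simp add: prob_space \<mu>_def)
qed

lemma (in prob_space) expectation_ycomp_over_n_tendsto:
  fixes \<alpha> :: "nat \<Rightarrow> 'a \<Rightarrow> real"
  assumes m: "1 \<le> m" and b: "0 \<le> b" and c: "0 \<le> c"
    and int: "\<And>i. 1 \<le> i \<Longrightarrow> integrable M (\<alpha> i)"
    and mean: "\<And>i. 1 \<le> i \<Longrightarrow> expectation (\<alpha> i) = a"
    and nonneg: "\<And>i. 1 \<le> i \<Longrightarrow> AE \<omega> in M. 0 \<le> \<alpha> i \<omega>"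
    and lim: "AE \<omega> in M. (\<lambda>k. xarr (\<lambda>i. \<alpha> i \<omega>) k / real k) \<longlonglongrightarrow> a"
  shows "(\<lambda>k. expectation (\<lambda>\<omega>. ycomp m b c (\<lambda>i. \<alpha> i \<omega>) k) / real k)
    \<longlonglongrightarrow> max a (max b ((b + c) / real m))"
proof -
  define y where "y k \<omega> = ycomp m b c (\<lambda>i. \<alpha> i \<omega>) k" for k \<omega>
  define x where "x k \<omega> = xarr (\<lambda>i. \<alpha> i \<omega>) k" for k \<omega>
  have x_int: "integrable M (x k)" for k
    unfolding x_def xarr_eq_sum by (intro Bochner_Integration.integrable_sum int) auto
  have x_mean: "expectation (x k) = real k * a" for k
    unfolding x_def xarr_eq_sum using int mean by (simp add: Bochner_Integration.integral_sum)
  define g where "g k \<omega> = (y k \<omega> - x k \<omega>) / real k" for k \<omega>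
  note g = expectation_ycomp_minus_xarr_over_n_tendsto[OF m b c _ nonneg lim,
      folded x_def y_def, folded g_def]
  have "(\<lambda>k. expectation (g k) + a) \<longlonglongrightarrow> max a (max b ((b + c) / real m)) - a + a"
    using int by (intro tendsto_add g(2) tendsto_const) auto
  then have "(\<lambda>k. expectation (g k) + a) \<longlonglongrightarrow> max a (max b ((b + c) / real m))"
    by simp
  moreover have "expectation (g k) + a = expectation (y k) / real k" if "1 \<le> k" for k
  proof -
    have "y k = (\<lambda>\<omega>. real k * g k \<omega> + x k \<omega>)"
      using that by (auto simp: g_def)
    then have "expectation (y k) = real k * expectation (g k) + real k * a"
      using g(1) int x_int x_mean by simp
    then show ?thesis using that by (simp add: field_simps)
  qed
  ultimately show ?thesis unfolding y_def
    by (rule Lim_transform_eventually[OF _ eventually_sequentiallyI])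
qed

theorem mainTheorem4:
  fixes M :: "'s measure" and \<alpha> :: "nat \<Rightarrow> 's \<Rightarrow> real"
    and m :: nat and b c :: real
  assumes "prob_space M"
    and "m \<ge> 1" and "b > 0" and "c > 0"
    and "\<And>i. i \<ge> 1 \<Longrightarrow> \<alpha> i \<in> borel_measurable M"
    and "prob_space.indep_vars M (\<lambda>_. borel) \<alpha> {1..}"
    and "\<And>i. i \<ge> 1 \<Longrightarrow> distr M borel (\<alpha> i) = distr M borel (\<alpha> 1)"
    and "\<And>i. i \<ge> 1 \<Longrightarrow> AE \<omega> in M. \<alpha> i \<omega> \<ge> 0"
    and "integrable M (\<alpha> 1)"
    and "integrable M (\<lambda>\<omega>. (\<alpha> 1 \<omega>)\<^sup>2)"
  shows "AE \<omega> in M. (\<lambda>k. ycomp m b c (\<lambda>i. \<alpha> i \<omega>) k / real k)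
            \<longlonglongrightarrow> max (integral\<^sup>L M (\<alpha> 1)) (max b ((b + c) / real m))
       \<and> (\<lambda>k. integral\<^sup>L M (\<lambda>\<omega>. ycomp m b c (\<lambda>i. \<alpha> i \<omega>) k) / real k)
            \<longlonglongrightarrow> max (integral\<^sup>L M (\<alpha> 1)) (max b ((b + c) / real m))"
proof -
  interpret prob_space M by fact
  note m = \<open>m \<ge> 1\<close> and b = less_imp_le[OF \<open>b > 0\<close>] and c = less_imp_le[OF \<open>c > 0\<close>]
  define a where "a = expectation (\<alpha> 1)"
  note same_distr = integrable_integral_cong_distr[OF assms(5) assms(5)[of 1] assms(7)]
  have sq: "integrable M (\<lambda>\<omega>. (\<alpha> i \<omega>)\<^sup>2)" and int: "integrable M (\<alpha> i)"
    and mean: "expectation (\<alpha> i) = a" and var: "variance (\<alpha> i) \<le> variance (\<alpha> 1)"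
    if "1 \<le> i" for i
    using same_distr[OF that, of "\<lambda>x. x\<^sup>2"] same_distr[OF that, of "\<lambda>x. x"]
      same_distr[OF that, of "\<lambda>x. (x - a)\<^sup>2"] assms(9,10) that by (simp_all add: a_def)
  have x_lim: "AE \<omega> in M. (\<lambda>k. xarr (\<lambda>i. \<alpha> i \<omega>) k / real k) \<longlonglongrightarrow> a"
    using AE_mean_tendsto_nonneg[OF assms(6) sq mean var assms(8)] by (simp add: xarr_eq_sum)
  have "AE \<omega> in M. \<forall>i. 1 \<le> i \<longrightarrow> 0 \<le> \<alpha> i \<omega>"
    unfolding AE_all_countable using assms(8) by auto
  with x_lim have "AE \<omega> in M. (\<lambda>k. ycomp m b c (\<lambda>i. \<alpha> i \<omega>) k / real k)
      \<longlonglongrightarrow> max a (max b ((b + c) / real m))"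
    by eventually_elim (rule ycomp_over_n_tendsto[OF m b c]; auto)
  moreover have "(\<lambda>k. expectation (\<lambda>\<omega>. ycomp m b c (\<lambda>i. \<alpha> i \<omega>) k) / real k)
      \<longlonglongrightarrow> max a (max b ((b + c) / real m))"
    by (rule expectation_ycomp_over_n_tendsto[OF m b c int mean assms(8) x_lim])
  ultimately show ?thesis unfolding a_def by simp
qed

end
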